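(* Let $\mathfrak g$ be a complex finite-dimensional simple Lie algebra with simple roots $\alpha_1,\dots,\alpha_n$ and Cartan matrix $a_{ij}=2(\alpha_i,\alpha_j)/(\alpha_i,\alpha_i)$. If $m$ is a real symmetric $n\times n$ matrix with $2m_{ij}=a_{ij}m_{ii}$ for all $i\neq j$ (all simple roots $m$-Cartan), then there is $r\in\mathbb R$ with $m_{ij}=r(\alpha_i,\alpha_j)$ for all $i,j$. In particular, if $q$ is a primitive $\ell$-th root of unity, $q_{ij}=q^{(\alpha_i,\alpha_j)}$, $\ell_i:=\ell/\gcd(\ell,(\alpha_i,\alpha_i))$ satisfies $\ell_i>1-a_{ij}$ for all $i\neq j$, and $m$ realises $q$, then $m_{ij}=r(\alpha_i,\alpha_j)$ for some $r\in\mathbb R$.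
   Context: $m$ realises $q$ means: $e^{i\pi m_{ij}}=q_{ij}$ for all $i,j$, and for every pair $i\ne j$ either (A) $2m_{ij}=a_{ij}m_{ii}$ or (B) $(1-a_{ij})m_{ii}=2$ holds, where $a$ is the Cartan matrix of the braiding (here equal to that of $\mathfrak g$), and the same holds after any finite sequence of Weyl groupoid reflections $\mathcal R^k:\alpha_i\mapsto\alpha_i-a_{ki}\alpha_k$ applied simultaneously to $m$ (as a bilinear form) and $q$ (as a bicharacter). *)

theory Defs
  imports Complex_Main
begin

text \<open>Simple roots of a complex finite-dimensional simple Lie algebra, given by the
Gram matrix B i j = (alpha_i, alpha_j) of the simple roots indexed by a finite type 'n.
By Serre's theorem these are exactly the matrices below: positive definite, integral
Cartan numbers a_ij = 2 B_ij / B_ii which are non-positive off the diagonal, connected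
Dynkin diagram.  Normalisation: short roots have squared length 2 (so B is integral).\<close>

definition cartanM :: "('n \<Rightarrow> 'n \<Rightarrow> int) \<Rightarrow> 'n \<Rightarrow> 'n \<Rightarrow> real" where
  "cartanM B i j = 2 * real_of_int (B i j) / real_of_int (B i i)"

definition simple_lie_roots :: "('n::finite \<Rightarrow> 'n \<Rightarrow> int) \<Rightarrow> bool" where
  "simple_lie_roots B \<longleftrightarrow>
     (\<forall>i j. B i j = B j i)
   \<and> (\<forall>x :: 'n \<Rightarrow> real. x \<noteq> (\<lambda>_. 0) \<longrightarrow>
          (\<Sum>i\<in>UNIV. \<Sum>j\<in>UNIV. x i * real_of_int (B i j) * x j) > 0)
   \<and> (\<forall>i j. i \<noteq> j \<longrightarrow> B i j \<le> 0 \<and> B i i dvd 2 * B i j)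
   \<and> (\<forall>i j. (\<lambda>a b. a \<noteq> b \<and> B a b \<noteq> 0)\<^sup>*\<^sup>* i j)
   \<and> (\<forall>i. 2 \<le> B i i) \<and> (\<exists>i. B i i = 2)"

definition brCartan :: "('n \<Rightarrow> 'n \<Rightarrow> complex) \<Rightarrow> 'n \<Rightarrow> 'n \<Rightarrow> int option" where
  "brCartan q i j =
     (if i = j then Some 2
      else if (\<exists>k::nat. (\<Sum>t\<le>k. q i i ^ t) * (1 - q i i ^ k * q i j * q j i) = 0)
      then Some (- int (LEAST k::nat. (\<Sum>t\<le>k. q i i ^ t) * (1 - q i i ^ k * q i j * q j i) = 0))
      else None)"

text \<open>Reflection R^k: alpha_i \<mapsto> alpha_i - a_ki alpha_k, applied to a bilinear form m
and to a bicharacter q (both given by their values on simple roots).\<close>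

definition reflM :: "('n \<Rightarrow> 'n \<Rightarrow> int) \<Rightarrow> 'n \<Rightarrow> ('n \<Rightarrow> 'n \<Rightarrow> real) \<Rightarrow> 'n \<Rightarrow> 'n \<Rightarrow> real" where
  "reflM a k m i j = m i j - of_int (a k j) * m i k - of_int (a k i) * m k j
                     + of_int (a k i) * of_int (a k j) * m k k"

definition reflQ :: "('n \<Rightarrow> 'n \<Rightarrow> int) \<Rightarrow> 'n \<Rightarrow> ('n \<Rightarrow> 'n \<Rightarrow> complex) \<Rightarrow> 'n \<Rightarrow> 'n \<Rightarrow> complex" where
  "reflQ a k q i j = q i j * q i k powi (- a k j) * q k j powi (- a k i)
                     * q k k powi (a k i * a k j)"

inductive reach :: "('n \<Rightarrow> 'n \<Rightarrow> real) \<Rightarrow> ('n \<Rightarrow> 'n \<Rightarrow> complex)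
                    \<Rightarrow> ('n \<Rightarrow> 'n \<Rightarrow> real) \<Rightarrow> ('n \<Rightarrow> 'n \<Rightarrow> complex) \<Rightarrow> bool"
  for m0 q0 where
  reach_refl: "reach m0 q0 m0 q0"
| reach_step: "reach m0 q0 m q \<Longrightarrow> (\<forall>j. brCartan q k j \<noteq> None) \<Longrightarrow>
     reach m0 q0 (reflM (\<lambda>x y. the (brCartan q x y)) k m)
                 (reflQ (\<lambda>x y. the (brCartan q x y)) k q)"

definition realises :: "('n \<Rightarrow> 'n \<Rightarrow> real) \<Rightarrow> ('n \<Rightarrow> 'n \<Rightarrow> complex) \<Rightarrow> bool" where
  "realises m q \<longleftrightarrow>
     (\<forall>m' q'. reach m q m' q' \<longrightarrow>
        (\<forall>i j. exp (\<i> * complex_of_real (pi * m' i j)) = q' i j)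
      \<and> (\<forall>i j. i \<noteq> j \<longrightarrow> (\<exists>a. brCartan q' i j = Some a \<and>
             (2 * m' i j = of_int a * m' i i \<or> (1 - of_int a) * m' i i = 2))))"

definition primitive_root :: "complex \<Rightarrow> nat \<Rightarrow> bool" where
  "primitive_root z l \<longleftrightarrow> 0 < l \<and> z ^ l = 1 \<and> (\<forall>k. 0 < k \<and> k < l \<longrightarrow> z ^ k \<noteq> 1)"

end

theory Submission
  imports Defs
begin

text \<open>For the first part, the Cartan condition says that the off-diagonal entries of m and of
the Gram matrix B are proportional with the factor m_ii / B_ii; along an edge of the connected
Dynkin diagram this factor is shared by both endpoints, so it is a global constant r.
For the second part, realisability at the initial stage gives for every i \<noteq> j either the
Cartan condition or (1 - a_ij) m_ii = 2.  Since q_ii = e^{i\<pi> m_ii}, the latter forces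
q^{(\<alpha>_i,\<alpha>_i)(1 - a_ij)} = 1, impossible because q^{(\<alpha>_i,\<alpha>_i)} has order \<ell>_i > 1 - a_ij.\<close>

lemma offdiag_eq_if_cartan:
  fixes B :: "'n \<Rightarrow> 'n \<Rightarrow> int" and m :: "'n \<Rightarrow> 'n \<Rightarrow> real"
  assumes "B i i \<noteq> 0" and "2 * m i j = cartanM B i j * m i i"
  shows "m i j = B i j * (m i i / B i i)"
  using assms by (simp add: cartanM_def)

lemma diag_ratio_const_if_cartan:
  fixes B :: "'n \<Rightarrow> 'n \<Rightarrow> int" and m :: "'n \<Rightarrow> 'n \<Rightarrow> real"
  assumes B_sym: "\<And>i j. B i j = B j i" and m_sym: "\<And>i j. m i j = m j i"
    and B_diag: "\<And>i. B i i \<noteq> 0"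
    and connected: "(\<lambda>a b. a \<noteq> b \<and> B a b \<noteq> 0)\<^sup>*\<^sup>* i j"
    and cartan: "\<And>i j. i \<noteq> j \<Longrightarrow> 2 * m i j = cartanM B i j * m i i"
  shows "m i i / B i i = m j j / B j j"
proof -
  have edge: "m a a / B a a = m b b / B b b" if "a \<noteq> b" "B a b \<noteq> 0" for a b
  proof -
    have "m a b = B a b * (m a a / B a a)" "m b a = B b a * (m b b / B b b)"
      using offdiag_eq_if_cartan[of B _ m, OF B_diag cartan] that by auto
    then have "B a b * (m a a / B a a) = B a b * (m b b / B b b)"
      using m_sym B_sym by metis
    then show ?thesis using that(2) by (metis mult_left_cancel of_int_0_eq_iff)
  qed
  from connected show ?thesis
    by (induction rule: rtranclp_induct) (auto dest: edge)
qed

lemma gram_multiple_if_cartan: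
  fixes B :: "'n \<Rightarrow> 'n \<Rightarrow> int" and m :: "'n \<Rightarrow> 'n \<Rightarrow> real"
  assumes B_sym: "\<And>i j. B i j = B j i" and m_sym: "\<And>i j. m i j = m j i"
    and B_diag: "\<And>i. B i i \<noteq> 0"
    and connected: "\<And>i j. (\<lambda>a b. a \<noteq> b \<and> B a b \<noteq> 0)\<^sup>*\<^sup>* i j"
    and cartan: "\<And>i j. i \<noteq> j \<Longrightarrow> 2 * m i j = cartanM B i j * m i i"
  shows "\<exists>r::real. \<forall>i j. m i j = r * B i j"
proof (intro exI allI)
  fix i j
  define k where "k = (undefined :: 'n)"
  have ratio: "m i i / B i i = m k k / B k k"
    using diag_ratio_const_if_cartan[OF B_sym m_sym B_diag connected cartan] .
  show "m i j = m k k / B k k * B i j"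
  proof (cases "i = j")
    case True
    then show ?thesis using ratio B_diag[of i] by (simp add: field_simps)
  next
    case False
    then show ?thesis using offdiag_eq_if_cartan[of B i m j, OF B_diag cartan[OF False]] ratio by simp
  qed
qed

lemma primitive_root_powi_eq_1_imp_dvd:
  fixes q :: complex
  assumes "primitive_root q l" "q powi z = 1"
  shows "int l dvd z"
proof -
  have l: "l > 0" "q ^ l = 1" and minimal: "\<And>k. 0 < k \<Longrightarrow> k < l \<Longrightarrow> q ^ k \<noteq> 1"
    using assms(1) unfolding primitive_root_def by auto
  have "q \<noteq> 0" using l by (metis power_0_left zero_neq_one gr_implies_not0)
  define r where "r = z mod int l"
  have r: "0 \<le> r" "r < int l" using l unfolding r_def by auto
  have "z = int l * (z div int l) + r" unfolding r_def by simp
  then have "q powi z = (q powi int l) powi (z div int l) * q powi r"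
    using \<open>q \<noteq> 0\<close> by (metis power_int_add power_int_mult)
  also have "\<dots> = q ^ nat r"
    using l(2) r(1) by (simp add: power_int_of_nat flip: power_int_of_nat[of q "nat r"])
  finally have "q ^ nat r = 1" using assms(2) by simp
  then have "r = 0" using minimal[of "nat r"] r by linarith
  then show ?thesis unfolding r_def by auto
qed

lemma div_gcd_dvd_if_dvd_mult:
  fixes l b x :: int
  assumes "l \<noteq> 0" "l dvd b * x"
  shows "l div gcd l b dvd x"
proof -
  define g where "g = gcd l b"
  have "g \<noteq> 0" using assms(1) unfolding g_def by simp
  have "coprime (l div g) (b div g)" using assms(1) unfolding g_def by (simp add: div_gcd_coprime)
  moreover have "l div g dvd (b div g) * x"
  proof -
    have "l div g * g dvd (b div g * x) * g"
      using assms(2) by (simp add: g_def algebra_simps)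
    then show ?thesis using \<open>g \<noteq> 0\<close> by simp
  qed
  ultimately show ?thesis unfolding g_def by (simp add: coprime_dvd_mult_right_iff)
qed

lemma primitive_root_powi_mult_ne_1:
  fixes q :: complex
  assumes "primitive_root q l" "x \<noteq> 0" "\<bar>x\<bar> < int l div gcd (int l) b"
  shows "q powi (b * x) \<noteq> 1"
proof
  assume "q powi (b * x) = 1"
  then have "int l dvd b * x" by (rule primitive_root_powi_eq_1_imp_dvd[OF assms(1)])
  moreover have "l > 0" using assms(1) unfolding primitive_root_def by simp
  ultimately have "int l div gcd (int l) b dvd x" by (simp add: div_gcd_dvd_if_dvd_mult)
  from dvd_imp_le_int[OF assms(2) this] show False using abs_ge_self assms(3) by fastforce
qed

lemma exp_pi_pow_eq_1:
  assumes "real k * x = 2"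
  shows "exp (\<i> * complex_of_real (pi * x)) ^ k = 1"
proof -
  have "exp (\<i> * complex_of_real (pi * x)) ^ k = exp (of_nat k * (\<i> * complex_of_real (pi * x)))"
    by (rule exp_of_nat_mult[symmetric])
  also have "of_nat k * (\<i> * complex_of_real (pi * x)) = 2 * complex_of_real pi * \<i>"
    using arg_cong[OF assms, of complex_of_real] by (simp add: algebra_simps)
  finally show ?thesis by (simp only: exp_two_pi_i)
qed

lemma brCartan_powi_gram:
  fixes q :: complex and B :: "'n \<Rightarrow> 'n \<Rightarrow> int"
  assumes prim: "primitive_root q l" and "i \<noteq> j" and B_sym: "B j i = B i j"
    and c: "2 * B i j = c * B i i" "c \<le> 0"
    and order: "1 - c < int l div gcd (int l) (B i i)"
  shows "brCartan (\<lambda>i j. q powi B i j) i j = Some c"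
proof -
  define Q where "Q = q powi B i i"
  have "q \<noteq> 0" using prim unfolding primitive_root_def
    by (metis power_0_left zero_neq_one gr_implies_not0)
  have Q_pow: "Q ^ k = q powi (B i i * int k)" for k
    unfolding Q_def by (simp add: power_int_mult)
  have Q_pow_ne_1: "Q ^ k \<noteq> 1" if "0 < k" "int k \<le> 1 - c" for k
    unfolding Q_pow using primitive_root_powi_mult_ne_1[OF prim] that order by simp
  have twisted: "Q ^ k * q powi B i j * q powi B j i = q powi (B i i * (int k + c))" for k
  proof -
    have "Q ^ k * q powi B i j * q powi B j i = q powi (B i i * int k + (B i j + B i j))"
      by (simp only: Q_pow B_sym mult.assoc power_int_add[OF disjI1[OF \<open>q \<noteq> 0\<close>]])
    also have "B i i * int k + (B i j + B i j) = B i i * (int k + c)"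
      using c(1) by (simp add: algebra_simps)
    finally show ?thesis .
  qed
  define P where "P = (\<lambda>k::nat. (\<Sum>t\<le>k. Q ^ t) * (1 - Q ^ k * q powi B i j * q powi B j i) = 0)"
  define K where "K = nat (- c)"
  have K: "int K = - c" unfolding K_def using c(2) by simp
  have "P K" unfolding P_def twisted K by simp
  have "\<not> P k" if "k < K" for k
  proof
    assume "P k"
    then consider "(\<Sum>t<Suc k. Q ^ t) = 0" | "Q ^ k * q powi B i j * q powi B j i = 1"
      unfolding P_def lessThan_Suc_atMost by auto
    then show False
    proof cases
      case 1
      have "Q ^ Suc k = 1"
      proof (cases "Q = 1")
        case True
        then show ?thesis using 1 by simp
      next
        case False
        then show ?thesis using 1 by (simp add: sum_gp_strict del: sum.lessThan_Suc)
      qed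
      then show False using Q_pow_ne_1[of "Suc k"] that K by simp
    next
      case 2
      then show False
        unfolding twisted using primitive_root_powi_mult_ne_1[OF prim, of "int k + c"] that K order
        by simp
    qed
  qed
  then have "(LEAST k. P k) = K"
    using \<open>P K\<close> by (intro Least_equality) (auto simp flip: not_less)
  then show ?thesis
    using \<open>i \<noteq> j\<close> \<open>P K\<close> K unfolding brCartan_def P_def Q_def by auto
qed

lemma realises_initial:
  assumes "realises m q" "i \<noteq> j"
  shows "exp (\<i> * complex_of_real (pi * m i i)) = q i i"
    and "\<exists>a. brCartan q i j = Some a \<and> (2 * m i j = of_int a * m i i \<or> (1 - of_int a) * m i i = 2)"
  using assms reach_refl unfolding realises_def by blast+

lemma cartan_if_realises:
  fixes B :: "'n::finite \<Rightarrow> 'n \<Rightarrow> int"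
  assumes B: "simple_lie_roots B" and prim: "primitive_root q l"
    and order: "\<And>i j. i \<noteq> j \<Longrightarrow> real_of_int (int l div gcd (int l) (B i i)) > 1 - cartanM B i j"
    and real: "realises m (\<lambda>i j. q powi B i j)"
    and "i \<noteq> j"
  shows "2 * m i j = cartanM B i j * m i i"
proof -
  have B_sym: "B j i = B i j" and "B i j \<le> 0" and "B i i dvd 2 * B i j" and "2 \<le> B i i"
    using B \<open>i \<noteq> j\<close> unfolding simple_lie_roots_def by auto
  define c where "c = 2 * B i j div B i i"
  have c: "2 * B i j = c * B i i"
    using \<open>B i i dvd 2 * B i j\<close> unfolding c_def by simp
  have cartan_c: "cartanM B i j = c"
    using c \<open>2 \<le> B i i\<close> unfolding cartanM_def by (simp add: field_simps flip: of_int_mult)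
  have "c * B i i \<le> 0" using c \<open>B i j \<le> 0\<close> by linarith
  then have "c \<le> 0" using \<open>2 \<le> B i i\<close> by (simp add: mult_le_0_iff)
  have c_order: "1 - c < int l div gcd (int l) (B i i)"
    using order[OF \<open>i \<noteq> j\<close>] cartan_c by linarith
  have "brCartan (\<lambda>i j. q powi B i j) i j = Some c"
    using brCartan_powi_gram[OF prim \<open>i \<noteq> j\<close> B_sym c \<open>c \<le> 0\<close> c_order] .
  then consider "2 * m i j = c * m i i" | "(1 - c) * m i i = 2"
    using realises_initial(2)[OF real \<open>i \<noteq> j\<close>] by auto
  then show ?thesis
  proof cases
    case 1
    then show ?thesis using cartan_c by simp
  next
    case 2
    have "real (nat (1 - c)) * m i i = 2" using 2 \<open>c \<le> 0\<close> by simp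
    from exp_pi_pow_eq_1[OF this] have "q powi (B i i * (1 - c)) = 1"
      using realises_initial(1)[OF real \<open>i \<noteq> j\<close>] \<open>c \<le> 0\<close>
      by (simp add: power_int_mult flip: power_int_of_nat)
    then show ?thesis
      using primitive_root_powi_mult_ne_1[OF prim, of "1 - c"] \<open>c \<le> 0\<close> c_order by simp
  qed
qed

theorem mainTheorem4:
  fixes B :: "'n::finite \<Rightarrow> 'n \<Rightarrow> int"
  assumes "simple_lie_roots B"
  shows "(\<forall>m :: 'n \<Rightarrow> 'n \<Rightarrow> real.
            (\<forall>i j. m i j = m j i) \<and> (\<forall>i j. i \<noteq> j \<longrightarrow> 2 * m i j = cartanM B i j * m i i)
            \<longrightarrow> (\<exists>r::real. \<forall>i j. m i j = r * real_of_int (B i j)))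
       \<and> (\<forall>(q::complex) (l::nat) (m :: 'n \<Rightarrow> 'n \<Rightarrow> real).
            primitive_root q l
            \<and> (\<forall>i j. i \<noteq> j \<longrightarrow>
                 real_of_int (int l div gcd (int l) (B i i)) > 1 - cartanM B i j)
            \<and> (\<forall>i j. m i j = m j i)
            \<and> realises m (\<lambda>i j. q powi B i j)
            \<longrightarrow> (\<exists>r::real. \<forall>i j. m i j = r * real_of_int (B i j)))"
proof -
  have B_sym: "\<And>i j. B i j = B j i" and B_pos: "\<And>i. 2 \<le> B i i"
    and connected: "\<And>i j. (\<lambda>a b. a \<noteq> b \<and> B a b \<noteq> 0)\<^sup>*\<^sup>* i j"
    using assms unfolding simple_lie_roots_def by auto
  have B_diag: "B i i \<noteq> 0" for i using B_pos[of i] by simp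
  show ?thesis
    by (auto intro!: gram_multiple_if_cartan[OF B_sym _ B_diag connected])
      (auto intro: cartan_if_realises[OF assms])
qed

end
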